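(* Let $r,\alpha\in\mathbb R$, $\sigma\in\mathbb R\setminus\{0\}$, let $X$ be the geometric Brownian motion $dX(t)=\alpha X(t)dt+\sigma X(t)dW(t)$, and let $g:]0,\infty[\to[0,+\infty]$ be Borel measurable with $\int_0^\infty g(x)\,dx\in]0,\infty]$. Let $d_1,d_2\in\mathbb C$ be the two roots of $P(d)=\frac{\sigma^2}{2}d^2+(\alpha-\frac{\sigma^2}{2})d-r$. If $d_1=d_2$, or $d_1=\overline{d_2}\in\mathbb C\setminus\mathbb R$, then $$E_x\left[\int_0^\infty e^{-rt}g(X(t))\,dt\right]=\infty$$ for every $x>0$.
   Context: $W$ is a standard Brownian motion and $E_x$ denotes expectation given $X(0)=x$. *)

theory Defs
  imports "HOL-Probability.Probability"
begin

definition brownian_motion :: "'a measure \<Rightarrow> (real \<Rightarrow> 'a \<Rightarrow> real) \<Rightarrow> bool" where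
  "brownian_motion M W \<longleftrightarrow>
     prob_space M \<and>
     (\<forall>t\<ge>0. W t \<in> borel_measurable M) \<and>
     (\<forall>\<omega>\<in>space M. W 0 \<omega> = 0) \<and>
     (\<forall>\<omega>\<in>space M. continuous_on {0..} (\<lambda>t. W t \<omega>)) \<and>
     (\<forall>s t. 0 \<le> s \<and> s < t \<longrightarrow>
        distributed M lborel (\<lambda>\<omega>. W t \<omega> - W s \<omega>) (normal_density 0 (sqrt (t - s)))) \<and>
     (\<forall>ts::real list. sorted_wrt (<) ts \<and> (\<forall>t\<in>set ts. 0 \<le> t) \<longrightarrow>
        prob_space.indep_vars M (\<lambda>_. borel)
          (\<lambda>i \<omega>. W (ts ! Suc i) \<omega> - W (ts ! i) \<omega>) {..<length ts - 1})"

text \<open>The (unique strong) solution of dX = alpha X dt + sigma X dW with X(0) = x.\<close>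
definition gbm :: "real \<Rightarrow> real \<Rightarrow> real \<Rightarrow> (real \<Rightarrow> 'a \<Rightarrow> real) \<Rightarrow> real \<Rightarrow> 'a \<Rightarrow> real" where
  "gbm \<alpha> \<sigma> x W t \<omega> = x * exp ((\<alpha> - \<sigma>\<^sup>2 / 2) * t + \<sigma> * W t \<omega>)"

end

theory Submission
  imports Defs
begin

text \<open>With \<open>\<mu> = \<alpha> - \<sigma>\<^sup>2/2\<close>, \<open>log (X t / x) = \<mu> t + \<sigma> W t\<close> has the \<open>N(\<mu> t, \<sigma>\<^sup>2 t)\<close> density
  \<open>p t\<close>, so by Tonelli \<open>E\<^sub>x \<integral> exp (-r t) g (X t) dt = \<integral> g (x e\<^sup>v) R v dv\<close>
  with the resolvent density \<open>R v = \<integral>\<^sub>0\<^sup>\<infinity> exp (-r t) p t v dt\<close>. Completing the square,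
  \<open>exp (-r t) p t v = C v / \<surd>t \<cdot> exp (- v\<^sup>2/(2\<sigma>\<^sup>2t) - t \<Delta>/(2\<sigma>\<^sup>2))\<close>, where \<open>\<Delta> = \<mu>\<^sup>2 + 2\<sigma>\<^sup>2r\<close>
  is the discriminant of \<open>P\<close>, and \<open>\<Delta> \<le> 0\<close> exactly when the roots of \<open>P\<close> are double or complex conjugate.
  Hence \<open>R v = \<infinity>\<close> for every \<open>v\<close>, while \<open>\<integral> g (x e\<^sup>v) dv > 0\<close> because \<open>g\<close> is not a.e. zero
  on \<open>]0,\<infinity>[\<close>.\<close>

lemma discriminant_nonpos_if_double_or_conjugate_roots:
  fixes a b c :: real and d1 d2 :: complex
  assumes factor: "\<forall>d. of_real a * d\<^sup>2 + of_real b * d + of_real c = of_real a * (d - d1) * (d - d2)"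
    and roots: "d1 = d2 \<or> d1 = cnj d2"
  shows "b\<^sup>2 - 4 * a * c \<le> 0"
proof -
  have c: "of_real c = of_real a * d1 * d2"
    using factor[rule_format, of 0] by simp
  have "of_real a + of_real b + of_real c = of_real a * (1 - d1) * (1 - d2)"
    using factor[rule_format, of 1] by simp
  then have b: "of_real b = - of_real a * (d1 + d2)"
    using c by (simp add: algebra_simps eq_neg_iff_add_eq_0)
  have disc: "complex_of_real (b\<^sup>2 - 4 * a * c) = (of_real a * (d1 - d2))\<^sup>2"
    unfolding of_real_diff of_real_mult of_real_power b c by (simp add: power2_eq_square algebra_simps)
  obtain y :: real where "(d1 - d2)\<^sup>2 = of_real (- y\<^sup>2)"
  proof (cases "d1 = d2")
    case False
    with roots have "(d1 - d2)\<^sup>2 = of_real (- (2 * Im d1)\<^sup>2)"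
      by (auto simp: complex_eq_iff power2_eq_square)
    then show thesis by (rule that)
  qed (auto intro: that[of 0])
  then have "complex_of_real (b\<^sup>2 - 4 * a * c) = of_real (- (a * y)\<^sup>2)"
    unfolding disc by (simp add: power_mult_distrib)
  then show ?thesis
    by (simp only: of_real_eq_iff) simp
qed

lemma nn_integral_inverse_sqrt_at_top: "(\<integral>\<^sup>+t\<in>{1..}. ennreal (1 / sqrt t) \<partial>lborel) = \<infinity>"
proof -
  have "of_nat n \<le> (\<integral>\<^sup>+t\<in>{1..}. ennreal (1 / sqrt t) \<partial>lborel)" for n
  proof -
    define m where "m = real n + 1"
    have m: "m \<ge> 1" unfolding m_def by simp
    have "ennreal (real n) \<le> ennreal (1 / m * (m\<^sup>2 - 1))"
      using m by (intro ennreal_leI) (simp add: m_def field_simps power2_eq_square)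
    also have "\<dots> = (\<integral>\<^sup>+t. ennreal (1 / m) * indicator {1..m\<^sup>2} t \<partial>lborel)"
      using m by (simp add: nn_integral_cmult ennreal_mult[symmetric])
    also have "\<dots> \<le> (\<integral>\<^sup>+t\<in>{1..}. ennreal (1 / sqrt t) \<partial>lborel)"
    proof (intro nn_integral_mono)
      fix t
      have "1 / m \<le> 1 / sqrt t" if "1 \<le> t" "t \<le> m\<^sup>2"
      proof -
        have "sqrt t \<le> m" using that m by (simp add: real_sqrt_le_iff')
        then show ?thesis using that m by (intro divide_left_mono) auto
      qed
      then show "ennreal (1 / m) * indicator {1..m\<^sup>2} t \<le> ennreal (1 / sqrt t) * indicator {1..} t"
        by (auto intro: ennreal_leI split: split_indicator)
    qed
    finally show ?thesis by (simp add: ennreal_of_nat_eq_real_of_nat)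
  qed
  then have "(SUP n. of_nat n :: ennreal) \<le> (\<integral>\<^sup>+t\<in>{1..}. ennreal (1 / sqrt t) \<partial>lborel)"
    by (rule SUP_least)
  then show ?thesis
    by (simp add: ennreal_SUP_of_nat_eq_top top_unique)
qed

lemma set_nn_integral_cont_up:
  fixes f :: "'a \<Rightarrow> ennreal"
  assumes [measurable]: "f \<in> borel_measurable M" "\<And>i. A i \<in> sets M" and A: "incseq A"
  shows "(\<lambda>i. \<integral>\<^sup>+x\<in>A i. f x \<partial>M) \<longlonglongrightarrow> (\<integral>\<^sup>+x\<in>(\<Union>i. A i). f x \<partial>M)"
proof (rule nn_integral_LIMSEQ)
  show "incseq (\<lambda>i x. f x * indicator (A i) x)"
    using A by (auto simp: incseq_def le_fun_def split: split_indicator)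
  show "(\<lambda>i. f x * indicator (A i) x) \<longlonglongrightarrow> f x * indicator (\<Union>i. A i) x" for x
  proof (cases "x \<in> (\<Union>i. A i)")
    case True
    then obtain i where "x \<in> A i" by blast
    then have "x \<in> A n" if "i \<le> n" for n
      using incseqD[OF A that] by blast
    then have "\<forall>\<^sub>F n in sequentially. f x * indicator (A n) x = f x * indicator (\<Union>i. A i) x"
      using True by (intro eventually_sequentiallyI[of i]) simp
    then show ?thesis by (rule tendsto_eventually)
  qed simp
qed simp

lemma nn_integral_exp_substitution:
  fixes f :: "real \<Rightarrow> ennreal" and x :: real
  assumes f[measurable]: "f \<in> borel_measurable borel" and x: "x > 0"
  shows "(\<integral>\<^sup>+y\<in>{0<..}. f y \<partial>lborel) = (\<integral>\<^sup>+v. f (x * exp v) * ennreal (x * exp v) \<partial>lborel)"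
proof -
  define I where "I n = {- real (Suc n) .. real (Suc n)}" for n
  define J where "J n = {x * exp (- real (Suc n)) .. x * exp (real (Suc n))}" for n
  have "incseq I"
    by (auto simp: incseq_def I_def)
  have "incseq J"
    using x by (auto simp: incseq_def J_def intro: order_trans[rotated])
  have "v \<in> I (nat \<lceil>\<bar>v\<bar>\<rceil>)" for v
    by (auto simp: I_def abs_le_iff) linarith+
  then have "(\<Union>n. I n) = UNIV"
    by blast
  have "(\<Union>n. J n) = {0<..}"
  proof (intro equalityI subsetI)
    fix y assume "y \<in> (\<Union>n. J n)"
    then show "y \<in> {0<..}"
      using x by (auto simp: J_def intro: less_le_trans[rotated])
  next
    fix y :: real assume "y \<in> {0<..}"
    then have "y = x * exp (ln (y / x))"
      using x by simp
    also have "\<dots> \<in> J (nat \<lceil>\<bar>ln (y / x)\<bar>\<rceil>)"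
      using \<open>ln (y / x) \<in> I (nat \<lceil>\<bar>ln (y / x)\<bar>\<rceil>)\<close> x by (auto simp: I_def J_def)
    finally show "y \<in> (\<Union>n. J n)" by blast
  qed
  have "(\<integral>\<^sup>+y\<in>J n. f y \<partial>lborel) = (\<integral>\<^sup>+v\<in>I n. f (x * exp v) * ennreal (x * exp v) \<partial>lborel)" for n
    unfolding I_def J_def
    by (rule nn_integral_substitution_aux[OF f])
       (use x in \<open>auto intro!: derivative_eq_intros continuous_intros\<close>)
  moreover have "(\<lambda>n. \<integral>\<^sup>+y\<in>J n. f y \<partial>lborel) \<longlonglongrightarrow> (\<integral>\<^sup>+y\<in>{0<..}. f y \<partial>lborel)"
    using set_nn_integral_cont_up[of f lborel J] \<open>incseq J\<close> \<open>(\<Union>n. J n) = {0<..}\<close>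
    by (simp add: J_def)
  moreover have "(\<lambda>n. \<integral>\<^sup>+v\<in>I n. f (x * exp v) * ennreal (x * exp v) \<partial>lborel)
      \<longlonglongrightarrow> (\<integral>\<^sup>+v. f (x * exp v) * ennreal (x * exp v) \<partial>lborel)"
    using set_nn_integral_cont_up[of "\<lambda>v. f (x * exp v) * ennreal (x * exp v)" lborel I]
      \<open>incseq I\<close> \<open>(\<Union>n. I n) = UNIV\<close>
    by (simp add: I_def)
  ultimately show ?thesis
    using LIMSEQ_unique by auto
qed

lemma nn_integral_comp_exp_neq_zero:
  fixes f :: "real \<Rightarrow> ennreal"
  assumes f[measurable]: "f \<in> borel_measurable borel" and "x > 0"
    and nonzero: "(\<integral>\<^sup>+y\<in>{0<..}. f y \<partial>lborel) \<noteq> 0"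
  shows "(\<integral>\<^sup>+v. f (x * exp v) \<partial>lborel) \<noteq> 0"
proof
  assume "(\<integral>\<^sup>+v. f (x * exp v) \<partial>lborel) = 0"
  then have "AE v in lborel. f (x * exp v) * ennreal (x * exp v) = 0"
    by (auto simp: nn_integral_0_iff_AE elim: AE_mp)
  then have "(\<integral>\<^sup>+v. f (x * exp v) * ennreal (x * exp v) \<partial>lborel) = 0"
    by (simp add: nn_integral_0_iff_AE)
  with nonzero show False
    using nn_integral_exp_substitution[OF f \<open>x > 0\<close>] by simp
qed

lemma LIMSEQ_ceiling_grid: "(\<lambda>n. of_int \<lceil>real (Suc n) * t\<rceil> / real (Suc n)) \<longlonglongrightarrow> t"
proof (rule tendsto_sandwich[OF _ _ tendsto_const LIMSEQ_inverse_real_of_nat_add[of t]])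
  have "t \<le> of_int \<lceil>c * t\<rceil> / c \<and> of_int \<lceil>c * t\<rceil> / c \<le> t + inverse c" if c: "c > 0" for c :: real
  proof -
    have "of_int \<lceil>c * t\<rceil> / c \<le> (c * t + 1) / c"
      using c by (intro divide_right_mono) linarith+
    moreover have "(c * t + 1) / c = t + inverse c"
      using c by (simp add: field_simps)
    ultimately show ?thesis
      using c by (simp add: pos_le_divide_eq mult.commute)
  qed
  then show "\<forall>\<^sub>F n in sequentially. t \<le> of_int \<lceil>real (Suc n) * t\<rceil> / real (Suc n)"
    and "\<forall>\<^sub>F n in sequentially. of_int \<lceil>real (Suc n) * t\<rceil> / real (Suc n) \<le> t + inverse (real (Suc n))"
    by (intro always_eventually allI; simp del: of_nat_Suc)+
qed

lemma measurable_continuous_paths: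
  fixes X :: "real \<Rightarrow> 'a \<Rightarrow> 'b::metric_space"
  assumes meas: "\<And>t. t \<ge> 0 \<Longrightarrow> X t \<in> borel_measurable M"
    and cont: "\<And>\<omega>. \<omega> \<in> space M \<Longrightarrow> continuous_on {0..} (\<lambda>t. X t \<omega>)"
  shows "(\<lambda>p. X (max (fst p) 0) (snd p)) \<in> borel_measurable (lborel \<Otimes>\<^sub>M M)"
proof (rule borel_measurable_LIMSEQ_metric)
  define s where "s n t = real (nat \<lceil>real (Suc n) * max t 0\<rceil>) / real (Suc n)" for n t
  show "(\<lambda>p. X (s n (fst p)) (snd p)) \<in> borel_measurable (lborel \<Otimes>\<^sub>M M)" for n
    unfolding s_def
  proof (rule measurable_compose_countable[where f="\<lambda>k p. X (real k / real (Suc n)) (snd p)"])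
    fix k :: nat
    have [measurable]: "X (real k / real (Suc n)) \<in> borel_measurable M"
      by (rule meas) simp
    show "(\<lambda>p. X (real k / real (Suc n)) (snd p)) \<in> borel_measurable (lborel \<Otimes>\<^sub>M M)"
      by measurable
  qed measurable
  fix p :: "real \<times> 'a" assume "p \<in> space (lborel \<Otimes>\<^sub>M M)"
  then have \<omega>: "snd p \<in> space M" by (auto simp: space_pair_measure)
  have "s n (fst p) = of_int \<lceil>real (Suc n) * max (fst p) 0\<rceil> / real (Suc n)" for n
    by (simp add: s_def)
  then have "(\<lambda>n. s n (fst p)) \<longlonglongrightarrow> max (fst p) 0"
    using LIMSEQ_ceiling_grid by presburger
  moreover have "s n (fst p) \<in> {0..}" for n
    unfolding s_def atLeast_iff by (intro divide_nonneg_nonneg of_nat_0_le_iff)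
  ultimately show "(\<lambda>n. X (s n (fst p)) (snd p)) \<longlonglongrightarrow> X (max (fst p) 0) (snd p)"
    by (intro continuous_on_tendsto_compose[OF cont[OF \<omega>]]) auto
qed

lemma gbm_marginal_nn_integral:
  fixes f :: "real \<Rightarrow> ennreal"
  assumes BM: "brownian_motion M W" and "\<sigma> \<noteq> 0" "t > 0"
    and f[measurable]: "f \<in> borel_measurable borel"
  shows "(\<integral>\<^sup>+\<omega>. f (gbm \<alpha> \<sigma> x W t \<omega>) \<partial>M) =
    (\<integral>\<^sup>+v. normal_density ((\<alpha> - \<sigma>\<^sup>2 / 2) * t) (\<bar>\<sigma>\<bar> * sqrt t) v * f (x * exp v) \<partial>lborel)"
proof -
  interpret prob_space M
    using BM by (simp add: brownian_motion_def)
  have "distributed M lborel (\<lambda>\<omega>. W t \<omega> - W 0 \<omega>) (normal_density 0 (sqrt t))"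
    using BM \<open>t > 0\<close> unfolding brownian_motion_def by fastforce
  then have "distributed M lborel (\<lambda>\<omega>. (\<alpha> - \<sigma>\<^sup>2 / 2) * t + \<sigma> * (W t \<omega> - W 0 \<omega>))
      (normal_density ((\<alpha> - \<sigma>\<^sup>2 / 2) * t) (\<bar>\<sigma>\<bar> * sqrt t))"
    using normal_density_affine \<open>\<sigma> \<noteq> 0\<close> \<open>t > 0\<close> by fastforce
  then have "(\<integral>\<^sup>+v. normal_density ((\<alpha> - \<sigma>\<^sup>2 / 2) * t) (\<bar>\<sigma>\<bar> * sqrt t) v * f (x * exp v) \<partial>lborel) =
      (\<integral>\<^sup>+\<omega>. f (x * exp ((\<alpha> - \<sigma>\<^sup>2 / 2) * t + \<sigma> * (W t \<omega> - W 0 \<omega>))) \<partial>M)"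
    by (rule distributed_nn_integral) measurable
  also have "\<dots> = (\<integral>\<^sup>+\<omega>. f (gbm \<alpha> \<sigma> x W t \<omega>) \<partial>M)"
    using BM by (intro nn_integral_cong) (simp add: gbm_def brownian_motion_def)
  finally show ?thesis ..
qed

lemma gbm_occupation_nn_integral:
  fixes \<phi> :: "real \<Rightarrow> real \<Rightarrow> ennreal"
  assumes BM: "brownian_motion M W" and "\<sigma> \<noteq> 0"
    and \<phi>[measurable]: "case_prod \<phi> \<in> borel_measurable (borel \<Otimes>\<^sub>M borel)"
  shows "(\<integral>\<^sup>+\<omega>. (\<integral>\<^sup>+t\<in>{0<..}. \<phi> t (gbm \<alpha> \<sigma> x W t \<omega>) \<partial>lborel) \<partial>M) =
    (\<integral>\<^sup>+v. (\<integral>\<^sup>+t\<in>{0<..}. normal_density ((\<alpha> - \<sigma>\<^sup>2 / 2) * t) (\<bar>\<sigma>\<bar> * sqrt t) v * \<phi> t (x * exp v) \<partial>lborel) \<partial>lborel)"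
proof -
  interpret prob_space M
    using BM by (simp add: brownian_motion_def)
  interpret pair_sigma_finite lborel M ..
  have L: "pair_sigma_finite lborel lborel" ..
  have [measurable]: "(\<lambda>p. W (max (fst p) 0) (snd p)) \<in> borel_measurable (lborel \<Otimes>\<^sub>M M)"
    using BM by (intro measurable_continuous_paths) (auto simp: brownian_motion_def)
  have \<phi>t[measurable]: "\<phi> t \<in> borel_measurable borel" for t
    using measurable_comp[OF measurable_Pair1'[of t borel borel] \<phi>] by (simp add: comp_def)
  have "(\<integral>\<^sup>+\<omega>. (\<integral>\<^sup>+t\<in>{0<..}. \<phi> t (gbm \<alpha> \<sigma> x W t \<omega>) \<partial>lborel) \<partial>M) =
      (\<integral>\<^sup>+\<omega>. (\<integral>\<^sup>+t. \<phi> t (gbm \<alpha> \<sigma> x W (max t 0) \<omega>) * indicator {0<..} t \<partial>lborel) \<partial>M)"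
    by (intro nn_integral_cong) (simp split: split_indicator)
  also have "\<dots> = (\<integral>\<^sup>+t. (\<integral>\<^sup>+\<omega>. \<phi> t (gbm \<alpha> \<sigma> x W (max t 0) \<omega>) * indicator {0<..} t \<partial>M) \<partial>lborel)"
    by (rule Fubini') (simp add: gbm_def split_beta')
  also have "\<dots> = (\<integral>\<^sup>+t. (\<integral>\<^sup>+v. normal_density ((\<alpha> - \<sigma>\<^sup>2 / 2) * t) (\<bar>\<sigma>\<bar> * sqrt t) v * \<phi> t (x * exp v) *
      indicator {0<..} t \<partial>lborel) \<partial>lborel)"
  proof (intro nn_integral_cong)
    fix t :: real
    show "(\<integral>\<^sup>+\<omega>. \<phi> t (gbm \<alpha> \<sigma> x W (max t 0) \<omega>) * indicator {0<..} t \<partial>M) =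
      (\<integral>\<^sup>+v. normal_density ((\<alpha> - \<sigma>\<^sup>2 / 2) * t) (\<bar>\<sigma>\<bar> * sqrt t) v * \<phi> t (x * exp v) * indicator {0<..} t \<partial>lborel)"
      using gbm_marginal_nn_integral[OF BM \<open>\<sigma> \<noteq> 0\<close> _ \<phi>t, of t]
      by (cases "t > 0") (simp_all add: nn_integral_multc)
  qed
  also have "\<dots> = (\<integral>\<^sup>+v. (\<integral>\<^sup>+t\<in>{0<..}. normal_density ((\<alpha> - \<sigma>\<^sup>2 / 2) * t) (\<bar>\<sigma>\<bar> * sqrt t) v * \<phi> t (x * exp v) \<partial>lborel) \<partial>lborel)"
    by (rule pair_sigma_finite.Fubini'[OF L, symmetric]) (simp add: normal_density_def split_beta')
  finally show ?thesis .
qed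

definition resolvent_density :: "real \<Rightarrow> real \<Rightarrow> real \<Rightarrow> real \<Rightarrow> ennreal" where
  "resolvent_density r \<mu> \<sigma> v =
    (\<integral>\<^sup>+t\<in>{0<..}. ennreal (exp (- r * t) * normal_density (\<mu> * t) (\<bar>\<sigma>\<bar> * sqrt t) v) \<partial>lborel)"

lemma resolvent_density_eq_top:
  assumes "\<sigma> \<noteq> 0" and disc: "\<mu>\<^sup>2 + 2 * \<sigma>\<^sup>2 * r \<le> 0"
  shows "resolvent_density r \<mu> \<sigma> v = \<infinity>"
proof -
  define C where "C = exp (v * \<mu> / \<sigma>\<^sup>2 - v\<^sup>2 / (2 * \<sigma>\<^sup>2)) / sqrt (2 * pi * \<sigma>\<^sup>2)"
  have C: "C > 0" using \<open>\<sigma> \<noteq> 0\<close> unfolding C_def by simp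
  have lower: "C / sqrt t \<le> exp (- r * t) * normal_density (\<mu> * t) (\<bar>\<sigma>\<bar> * sqrt t) v"
    if t: "t \<ge> 1" for t
  proof -
    have "- r * t - (v - \<mu> * t)\<^sup>2 / (2 * \<sigma>\<^sup>2 * t) =
       v * \<mu> / \<sigma>\<^sup>2 - v\<^sup>2 / (2 * \<sigma>\<^sup>2 * t) - t * (\<mu>\<^sup>2 + 2 * \<sigma>\<^sup>2 * r) / (2 * \<sigma>\<^sup>2)"
      using t \<open>\<sigma> \<noteq> 0\<close> by (simp add: field_simps power2_eq_square)
    also have "\<dots> \<ge> v * \<mu> / \<sigma>\<^sup>2 - v\<^sup>2 / (2 * \<sigma>\<^sup>2)"
    proof -
      have "v\<^sup>2 / (2 * \<sigma>\<^sup>2 * t) \<le> v\<^sup>2 / (2 * \<sigma>\<^sup>2)"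
        using t \<open>\<sigma> \<noteq> 0\<close> by (intro divide_left_mono) auto
      moreover have "t * (\<mu>\<^sup>2 + 2 * \<sigma>\<^sup>2 * r) / (2 * \<sigma>\<^sup>2) \<le> 0"
        using t disc by (intro divide_nonpos_nonneg mult_nonneg_nonpos) auto
      ultimately show ?thesis by linarith
    qed
    finally have "exp (v * \<mu> / \<sigma>\<^sup>2 - v\<^sup>2 / (2 * \<sigma>\<^sup>2)) \<le>
        exp (- r * t) * exp (- (v - \<mu> * t)\<^sup>2 / (2 * \<sigma>\<^sup>2 * t))"
      by (simp add: exp_add[symmetric])
    then have "C / sqrt t \<le> exp (- r * t) * exp (- (v - \<mu> * t)\<^sup>2 / (2 * \<sigma>\<^sup>2 * t)) / (sqrt (2 * pi * \<sigma>\<^sup>2) * sqrt t)"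
      unfolding C_def divide_divide_eq_left by (rule divide_right_mono) (use t in simp)
    also have "\<dots> = exp (- r * t) * normal_density (\<mu> * t) (\<bar>\<sigma>\<bar> * sqrt t) v"
      using t by (simp add: normal_density_def power_mult_distrib real_sqrt_mult mult.assoc)
    finally show ?thesis .
  qed
  have "(\<integral>\<^sup>+t\<in>{1..}. ennreal C * ennreal (1 / sqrt t) \<partial>lborel) \<le>
      (\<integral>\<^sup>+t\<in>{0<..}. ennreal (exp (- r * t) * normal_density (\<mu> * t) (\<bar>\<sigma>\<bar> * sqrt t) v) \<partial>lborel)"
  proof (intro nn_integral_mono)
    fix t
    show "ennreal C * ennreal (1 / sqrt t) * indicator {1..} t \<le>
        ennreal (exp (- r * t) * normal_density (\<mu> * t) (\<bar>\<sigma>\<bar> * sqrt t) v) * indicator {0<..} t"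
      using lower[of t] C by (auto simp: ennreal_mult[symmetric] intro!: ennreal_leI split: split_indicator)
  qed
  moreover have "(\<integral>\<^sup>+t\<in>{1..}. ennreal C * ennreal (1 / sqrt t) \<partial>lborel) = \<infinity>"
    using C by (simp add: mult.assoc nn_integral_cmult nn_integral_inverse_sqrt_at_top ennreal_mult_top)
  ultimately show ?thesis
    unfolding resolvent_density_def by (simp add: top_unique)
qed

lemma gbm_discounted_occupation_nn_integral:
  fixes f :: "real \<Rightarrow> ennreal"
  assumes BM: "brownian_motion M W" and "\<sigma> \<noteq> 0" and f[measurable]: "f \<in> borel_measurable borel"
  shows "(\<integral>\<^sup>+\<omega>. (\<integral>\<^sup>+t\<in>{0<..}. ennreal (exp (- r * t)) * f (gbm \<alpha> \<sigma> x W t \<omega>) \<partial>lborel) \<partial>M) =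
    (\<integral>\<^sup>+v. resolvent_density r (\<alpha> - \<sigma>\<^sup>2 / 2) \<sigma> v * f (x * exp v) \<partial>lborel)"
proof -
  let ?\<mu> = "\<alpha> - \<sigma>\<^sup>2 / 2"
  have "(\<integral>\<^sup>+\<omega>. (\<integral>\<^sup>+t\<in>{0<..}. ennreal (exp (- r * t)) * f (gbm \<alpha> \<sigma> x W t \<omega>) \<partial>lborel) \<partial>M) =
      (\<integral>\<^sup>+v. (\<integral>\<^sup>+t\<in>{0<..}. normal_density (?\<mu> * t) (\<bar>\<sigma>\<bar> * sqrt t) v *
        (ennreal (exp (- r * t)) * f (x * exp v)) \<partial>lborel) \<partial>lborel)"
    by (rule gbm_occupation_nn_integral[OF BM \<open>\<sigma> \<noteq> 0\<close>]) measurable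
  also have "\<dots> = (\<integral>\<^sup>+v. resolvent_density r ?\<mu> \<sigma> v * f (x * exp v) \<partial>lborel)"
  proof (intro nn_integral_cong)
    fix v
    have "resolvent_density r ?\<mu> \<sigma> v * f (x * exp v) =
      (\<integral>\<^sup>+t. ennreal (exp (- r * t) * normal_density (?\<mu> * t) (\<bar>\<sigma>\<bar> * sqrt t) v) *
        indicator {0<..} t * f (x * exp v) \<partial>lborel)"
      unfolding resolvent_density_def by (rule nn_integral_multc[symmetric]) (simp add: normal_density_def)
    then show "(\<integral>\<^sup>+t\<in>{0<..}. normal_density (?\<mu> * t) (\<bar>\<sigma>\<bar> * sqrt t) v *
        (ennreal (exp (- r * t)) * f (x * exp v)) \<partial>lborel) = resolvent_density r ?\<mu> \<sigma> v * f (x * exp v)"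
      by (simp add: ennreal_mult' mult_ac)
  qed
  finally show ?thesis .
qed

theorem proposition1:
  fixes M :: "'a measure" and W :: "real \<Rightarrow> 'a \<Rightarrow> real"
    and r \<alpha> \<sigma> :: real and g :: "real \<Rightarrow> ennreal" and d1 d2 :: complex
  assumes BM: "brownian_motion M W"
    and sigma: "\<sigma> \<noteq> 0"
    and g_meas: "g \<in> borel_measurable (restrict_space borel {0<..})"
    and g_int: "(\<integral>\<^sup>+ y \<in> {0<..}. g y \<partial>lborel) \<noteq> 0"
    and roots: "\<forall>d::complex. complex_of_real (\<sigma>\<^sup>2 / 2) * d\<^sup>2 + complex_of_real (\<alpha> - \<sigma>\<^sup>2 / 2) * d
                   - complex_of_real r = complex_of_real (\<sigma>\<^sup>2 / 2) * (d - d1) * (d - d2)"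
    and root_cond: "d1 = d2 \<or> (d1 = cnj d2 \<and> d1 \<notin> \<real>)"
    and x: "x > 0"
  shows "(\<integral>\<^sup>+ \<omega>. (\<integral>\<^sup>+ t \<in> {0..}. ennreal (exp (- r * t)) * g (gbm \<alpha> \<sigma> x W t \<omega>) \<partial>lborel) \<partial>M) = \<infinity>"
proof -
  have disc: "(\<alpha> - \<sigma>\<^sup>2 / 2)\<^sup>2 + 2 * \<sigma>\<^sup>2 * r \<le> 0"
    using discriminant_nonpos_if_double_or_conjugate_roots[of "\<sigma>\<^sup>2 / 2" "\<alpha> - \<sigma>\<^sup>2 / 2" "- r" d1 d2]
      roots root_cond by auto
  define G where "G y = g (if 0 < y then y else 1)" for y
  have "(\<lambda>y::real. if 0 < y then y else 1) \<in> measurable borel (restrict_space borel {0<..})"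
    by (rule measurable_restrict_space2) auto
  from measurable_comp[OF this g_meas] have G[measurable]: "G \<in> borel_measurable borel"
    unfolding G_def comp_def .
  have "(\<integral>\<^sup>+y\<in>{0<..}. G y \<partial>lborel) = (\<integral>\<^sup>+y\<in>{0<..}. g y \<partial>lborel)"
    by (intro nn_integral_cong) (simp add: G_def split: split_indicator)
  then have G_nonzero: "(\<integral>\<^sup>+v. G (x * exp v) \<partial>lborel) \<noteq> 0"
    using nn_integral_comp_exp_neq_zero[OF G x] g_int by simp
  have "(\<integral>\<^sup>+\<omega>. (\<integral>\<^sup>+t\<in>{0<..}. ennreal (exp (- r * t)) * G (gbm \<alpha> \<sigma> x W t \<omega>) \<partial>lborel) \<partial>M) =
      (\<integral>\<^sup>+v. \<infinity> * G (x * exp v) \<partial>lborel)"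
    unfolding gbm_discounted_occupation_nn_integral[OF BM sigma G] resolvent_density_eq_top[OF sigma disc] ..
  also have "\<dots> = \<infinity> * (\<integral>\<^sup>+v. G (x * exp v) \<partial>lborel)"
    by (rule nn_integral_cmult) measurable
  also have "\<dots> = \<infinity>"
    using G_nonzero by (simp add: ennreal_top_mult)
  finally have "(\<integral>\<^sup>+\<omega>. (\<integral>\<^sup>+t\<in>{0<..}. ennreal (exp (- r * t)) * G (gbm \<alpha> \<sigma> x W t \<omega>) \<partial>lborel) \<partial>M) = \<infinity>" .
  moreover have "(\<integral>\<^sup>+\<omega>. (\<integral>\<^sup>+t\<in>{0<..}. ennreal (exp (- r * t)) * G (gbm \<alpha> \<sigma> x W t \<omega>) \<partial>lborel) \<partial>M) \<le>
      (\<integral>\<^sup>+\<omega>. (\<integral>\<^sup>+t\<in>{0..}. ennreal (exp (- r * t)) * g (gbm \<alpha> \<sigma> x W t \<omega>) \<partial>lborel) \<partial>M)"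
    using x by (intro nn_integral_mono) (auto simp: G_def gbm_def split: split_indicator)
  ultimately show ?thesis
    by (simp add: top_unique)
qed

end
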